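(* $\mathrm{Md}$ is a finite complete axiomatisation of the equational theory of cancellation meadows: for all $\Sigma_m$-terms $r,s$, $\mathrm{Md}\vdash r=s$ if and only if $r=s$ holds in every $\Sigma_m$-structure satisfying $\mathrm{Md}$ and the inverse law $\mathrm{IL}$.
   Context: $\Sigma_m=(0,1,+,\cdot,-,{}^{-1})$; $\mathrm{Md}$ is the set of equations $(x+y)+z=x+(y+z)$, $x+y=y+x$, $x+0=x$, $x+(-x)=0$, $(x\cdot y)\cdot z=x\cdot(y\cdot z)$, $x\cdot y=y\cdot x$, $1\cdot x=x$, $x\cdot(y+z)=x\cdot y+x\cdot z$, $(x^{-1})^{-1}=x$, $x\cdot(x\cdot x^{-1})=x$. The inverse law $\mathrm{IL}$ is the conditional axiom $x\neq 0\rightarrow x\cdot x^{-1}=1$. $\vdash$ is derivability in equational logic. *)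

theory Defs
  imports Main "HOL-Library.Infinite_Typeclass"
begin

datatype mterm =
    Var nat
  | Zero
  | One
  | Add mterm mterm
  | Mul mterm mterm
  | Neg mterm
  | Inv mterm

fun subst :: "(nat \<Rightarrow> mterm) \<Rightarrow> mterm \<Rightarrow> mterm" where
  "subst \<sigma> (Var i) = \<sigma> i"
| "subst \<sigma> Zero = Zero"
| "subst \<sigma> One = One"
| "subst \<sigma> (Add a b) = Add (subst \<sigma> a) (subst \<sigma> b)"
| "subst \<sigma> (Mul a b) = Mul (subst \<sigma> a) (subst \<sigma> b)"
| "subst \<sigma> (Neg a) = Neg (subst \<sigma> a)"
| "subst \<sigma> (Inv a) = Inv (subst \<sigma> a)"

inductive derivable :: "(mterm \<times> mterm) set \<Rightarrow> mterm \<Rightarrow> mterm \<Rightarrow> bool" for E where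
  ax: "(l, r) \<in> E \<Longrightarrow> derivable E (subst \<sigma> l) (subst \<sigma> r)"
| refl: "derivable E t t"
| sym: "derivable E t u \<Longrightarrow> derivable E u t"
| trans: "derivable E t u \<Longrightarrow> derivable E u v \<Longrightarrow> derivable E t v"
| cong_Add: "derivable E a a' \<Longrightarrow> derivable E b b' \<Longrightarrow> derivable E (Add a b) (Add a' b')"
| cong_Mul: "derivable E a a' \<Longrightarrow> derivable E b b' \<Longrightarrow> derivable E (Mul a b) (Mul a' b')"
| cong_Neg: "derivable E a a' \<Longrightarrow> derivable E (Neg a) (Neg a')"
| cong_Inv: "derivable E a a' \<Longrightarrow> derivable E (Inv a) (Inv a')"

definition Md :: "(mterm \<times> mterm) set" where
  "Md = (let x = Var 0; y = Var 1; z = Var 2 in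
   { (Add (Add x y) z, Add x (Add y z)),
     (Add x y, Add y x),
     (Add x Zero, x),
     (Add x (Neg x), Zero),
     (Mul (Mul x y) z, Mul x (Mul y z)),
     (Mul x y, Mul y x),
     (Mul One x, x),
     (Mul x (Add y z), Add (Mul x y) (Mul x z)),
     (Inv (Inv x), x),
     (Mul x (Mul x (Inv x)), x) })"

record 'a mstruct =
  car :: "'a set"
  zero :: 'a
  one :: 'a
  add :: "'a \<Rightarrow> 'a \<Rightarrow> 'a"
  mul :: "'a \<Rightarrow> 'a \<Rightarrow> 'a"
  neg :: "'a \<Rightarrow> 'a"
  inv :: "'a \<Rightarrow> 'a"

definition is_mstruct :: "('a, 'b) mstruct_scheme \<Rightarrow> bool" where
  "is_mstruct S \<longleftrightarrow>
     zero S \<in> car S \<and> one S \<in> car S \<and>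
     (\<forall>x\<in>car S. \<forall>y\<in>car S. add S x y \<in> car S \<and> mul S x y \<in> car S) \<and>
     (\<forall>x\<in>car S. neg S x \<in> car S \<and> inv S x \<in> car S)"

fun eval :: "('a, 'b) mstruct_scheme \<Rightarrow> (nat \<Rightarrow> 'a) \<Rightarrow> mterm \<Rightarrow> 'a" where
  "eval S v (Var i) = v i"
| "eval S v Zero = zero S"
| "eval S v One = one S"
| "eval S v (Add a b) = add S (eval S v a) (eval S v b)"
| "eval S v (Mul a b) = mul S (eval S v a) (eval S v b)"
| "eval S v (Neg a) = neg S (eval S v a)"
| "eval S v (Inv a) = inv S (eval S v a)"

definition valid_in :: "('a, 'b) mstruct_scheme \<Rightarrow> mterm \<Rightarrow> mterm \<Rightarrow> bool" where
  "valid_in S r s \<longleftrightarrow> (\<forall>v. (\<forall>i. v i \<in> car S) \<longrightarrow> eval S v r = eval S v s)"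

definition satisfies :: "('a, 'b) mstruct_scheme \<Rightarrow> (mterm \<times> mterm) set \<Rightarrow> bool" where
  "satisfies S E \<longleftrightarrow> (\<forall>(l, r)\<in>E. valid_in S l r)"

definition satisfies_IL :: "('a, 'b) mstruct_scheme \<Rightarrow> bool" where
  "satisfies_IL S \<longleftrightarrow> (\<forall>x\<in>car S. x \<noteq> zero S \<longrightarrow> mul S x (inv S x) = one S)"

definition cancellation_meadow :: "('a, 'b) mstruct_scheme \<Rightarrow> bool" where
  "cancellation_meadow S \<longleftrightarrow> is_mstruct S \<and> satisfies S Md \<and> satisfies_IL S"

end

theory Submission
  imports Defs "HOL-Library.Countable"
begin

(* Completeness goes through the free
   meadow: the Sigma_m-terms modulo Md-derivability form a commutative ring with a
   pseudo-inverse x^-1 satisfying (x^-1)^-1 = x and x (x x^-1) = x, i.e. a meadow.  If r = s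
   is not derivable, then d = [r] - [s] is nonzero in the free meadow, e = d d^-1 is a nonzero
   idempotent, and Zorn's lemma yields an ideal maximal among those avoiding e; such an ideal
   is prime.  Modulo a prime ideal every nonzero element x satisfies x x^-1 = 1, and ^-1 is
   compatible with the congruence, so the quotient is a cancellation meadow refuting r = s.
   Finally the (countable) counter-model is copied into the given infinite type. *)

lemma eval_subst: "eval S v (subst \<sigma> t) = eval S (\<lambda>i. eval S v (\<sigma> i)) t"
  by (induction t) auto

lemma eval_closed: "is_mstruct S \<Longrightarrow> \<forall>i. v i \<in> car S \<Longrightarrow> eval S v t \<in> car S"
  by (induction t) (auto simp: is_mstruct_def)

lemma soundness:
  assumes "derivable E r s" "is_mstruct S" "satisfies S E" "\<forall>i. v i \<in> car S"
  shows "eval S v r = eval S v s"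
  using assms
proof (induction arbitrary: v rule: derivable.induct)
  case (ax l r \<sigma>)
  then show ?case
    unfolding eval_subst using eval_closed[OF ax(2) ax(4)]
    by (auto simp: satisfies_def valid_in_def)
qed auto

section \<open>Meadows as a type class\<close>

text \<open>A meadow is a commutative ring with an involutive pseudo-inverse satisfying
  x (x x^-1) = x: a model of Md, here with 0 \<noteq> 1 as required by comm_ring_1.\<close>
class meadow = comm_ring_1 + inverse +
  assumes inverse_inverse_meadow: "inverse (inverse x) = x"
    and mult_inverse_reflexive: "x * (x * inverse x) = x"
begin

lemma inverse_reflexive: "inverse x = x * inverse x * inverse x"
  using mult_inverse_reflexive[of "inverse x"] by (simp add: inverse_inverse_meadow ac_simps)

lemma idempotent_mult_inverse: "(x * inverse x) * (x * inverse x) = x * inverse x"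
proof -
  have "(x * inverse x) * (x * inverse x) = (x * (x * inverse x)) * inverse x"
    by (simp add: ac_simps)
  then show ?thesis by (simp add: mult_inverse_reflexive)
qed

lemma mult_inverse_eq_0_iff: "x * inverse x = 0 \<longleftrightarrow> x = 0"
  by (metis mult_inverse_reflexive mult_zero_left mult_zero_right)

end

definition meadow_struct :: "'a::meadow mstruct" where
  "meadow_struct = \<lparr>car = UNIV, zero = 0, one = 1, add = (+), mul = (*), neg = uminus,
     inv = inverse\<rparr>"

lemma meadow_struct_simps [simp]:
  "car meadow_struct = UNIV" "zero meadow_struct = 0" "one meadow_struct = 1"
  "add meadow_struct = (+)" "mul meadow_struct = (*)" "neg meadow_struct = uminus"
  "mstruct.inv meadow_struct = inverse"
  by (simp_all add: meadow_struct_def)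

lemma meadow_struct_satisfies_Md: "satisfies (meadow_struct :: 'a::meadow mstruct) Md"
  by (auto simp: satisfies_def valid_in_def Md_def Let_def algebra_simps
      inverse_inverse_meadow mult_inverse_reflexive)

section \<open>The free meadow\<close>

text \<open>The two-element Boolean structure satisfies Md, so 0 = 1 is not derivable.\<close>
definition bool_struct :: "bool mstruct" where
  "bool_struct = \<lparr>car = UNIV, zero = False, one = True, add = (\<noteq>), mul = (\<and>),
     neg = id, inv = id\<rparr>"

lemma Md_consistent: "\<not> derivable Md Zero One"
proof
  assume "derivable Md Zero One"
  moreover have "is_mstruct bool_struct" by (simp add: is_mstruct_def bool_struct_def)
  moreover have "satisfies bool_struct Md"
    by (auto simp: satisfies_def valid_in_def Md_def bool_struct_def Let_def)
  ultimately have "eval bool_struct (\<lambda>_. True) Zero = eval bool_struct (\<lambda>_. True) One"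
    by (intro soundness) (auto simp: bool_struct_def)
  then show False by (simp add: bool_struct_def)
qed

lemma equivp_derivable: "equivp (derivable E)"
  by (intro equivpI reflpI sympI transpI) (auto intro: derivable.intros)

quotient_type fm = mterm / "derivable Md"
  by (rule equivp_derivable)

lemma Md_members:
  "(Add (Add (Var 0) (Var 1)) (Var 2), Add (Var 0) (Add (Var 1) (Var 2))) \<in> Md"
  "(Add (Var 0) (Var 1), Add (Var 1) (Var 0)) \<in> Md"
  "(Add (Var 0) Zero, Var 0) \<in> Md"
  "(Add (Var 0) (Neg (Var 0)), Zero) \<in> Md"
  "(Mul (Mul (Var 0) (Var 1)) (Var 2), Mul (Var 0) (Mul (Var 1) (Var 2))) \<in> Md"
  "(Mul (Var 0) (Var 1), Mul (Var 1) (Var 0)) \<in> Md"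
  "(Mul One (Var 0), Var 0) \<in> Md"
  "(Mul (Var 0) (Add (Var 1) (Var 2)), Add (Mul (Var 0) (Var 1)) (Mul (Var 0) (Var 2))) \<in> Md"
  "(Inv (Inv (Var 0)), Var 0) \<in> Md"
  "(Mul (Var 0) (Mul (Var 0) (Inv (Var 0))), Var 0) \<in> Md"
  by (simp_all add: Md_def Let_def)

lemma derivable_Md_instances:
  "derivable Md (Add (Add a b) c) (Add a (Add b c))"
  "derivable Md (Add a b) (Add b a)"
  "derivable Md (Add a Zero) a"
  "derivable Md (Add a (Neg a)) Zero"
  "derivable Md (Mul (Mul a b) c) (Mul a (Mul b c))"
  "derivable Md (Mul a b) (Mul b a)"
  "derivable Md (Mul One a) a"
  "derivable Md (Mul a (Add b c)) (Add (Mul a b) (Mul a c))"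
  "derivable Md (Inv (Inv a)) a"
  "derivable Md (Mul a (Mul a (Inv a))) a"
  using Md_members[THEN derivable.ax[where \<sigma> = "\<lambda>i. if i = 0 then a else if i = 1 then b else c"]]
  by simp_all

text \<open>The operations of the free meadow are induced by the term constructors; each class axiom is
  an instance of an axiom of Md, and 0 \<noteq> 1 is the consistency of Md.\<close>
instantiation fm :: meadow
begin

lift_definition zero_fm :: fm is Zero .
lift_definition one_fm :: fm is One .
lift_definition plus_fm :: "fm \<Rightarrow> fm \<Rightarrow> fm" is Add by (rule derivable.cong_Add)
lift_definition times_fm :: "fm \<Rightarrow> fm \<Rightarrow> fm" is Mul by (rule derivable.cong_Mul)
lift_definition uminus_fm :: "fm \<Rightarrow> fm" is Neg by (rule derivable.cong_Neg)
lift_definition inverse_fm :: "fm \<Rightarrow> fm" is Inv by (rule derivable.cong_Inv)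
definition minus_fm :: "fm \<Rightarrow> fm \<Rightarrow> fm" where "minus_fm a b = a + - b"
definition divide_fm :: "fm \<Rightarrow> fm \<Rightarrow> fm" where "divide_fm a b = a * inverse b"

lemma fm_Md_laws:
  fixes a b c :: fm
  shows "a + b + c = a + (b + c)" "a + b = b + a" "a + 0 = a" "a + - a = 0"
    "a * b * c = a * (b * c)" "a * b = b * a" "1 * a = a" "a * (b + c) = a * b + a * c"
    "inverse (inverse a) = a" "a * (a * inverse a) = a"
  by (transfer, rule derivable_Md_instances)+

instance
proof
  fix a b c :: fm
  show "a + b + c = a + (b + c)" "a + b = b + a" "a * b * c = a * (b * c)" "a * b = b * a"
    "1 * a = a" "inverse (inverse a) = a" "a * (a * inverse a) = a"
    by (rule fm_Md_laws)+
  show "0 + a = a" by (metis fm_Md_laws(2,3))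
  show "- a + a = 0" by (metis fm_Md_laws(2,4))
  show "a - b = a + - b" by (simp add: minus_fm_def)
  show "(a + b) * c = a * c + b * c" by (metis fm_Md_laws(6,8))
  show "(0::fm) \<noteq> 1" using Md_consistent by (simp add: zero_fm_def one_fm_def fm.abs_eq_iff)
qed

end

lemma eval_free_meadow: "eval meadow_struct (\<lambda>i. abs_fm (Var i)) t = abs_fm t"
  by (induction t) (simp_all add: zero_fm_def one_fm_def plus_fm.abs_eq times_fm.abs_eq
      uminus_fm.abs_eq inverse_fm.abs_eq)

instance mterm :: countable by countable_datatype

text \<open>The free meadow is countable, hence embeds into every infinite type.\<close>
lemma free_meadow_embeds: "\<exists>h :: fm \<Rightarrow> 'a::infinite. inj h"
proof -
  obtain f :: "nat \<Rightarrow> 'a" where "inj f"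
    using infinite_countable_subset[OF infinite_UNIV] by auto
  moreover have "inj rep_fm"
    by (metis Quotient3_abs_rep Quotient3_fm injI)
  ultimately have "inj (f \<circ> to_nat \<circ> rep_fm)" by (intro inj_compose) auto
  then show ?thesis by blast
qed

section \<open>Ideals of commutative rings\<close>

definition ideal :: "'a::comm_ring_1 set \<Rightarrow> bool" where
  "ideal I \<longleftrightarrow> 0 \<in> I \<and> (\<forall>a\<in>I. \<forall>b\<in>I. a + b \<in> I) \<and> (\<forall>a\<in>I. \<forall>k. k * a \<in> I)"

definition prime_ideal :: "'a::comm_ring_1 set \<Rightarrow> bool" where
  "prime_ideal P \<longleftrightarrow> ideal P \<and> 1 \<notin> P \<and> (\<forall>a b. a * b \<in> P \<longrightarrow> a \<in> P \<or> b \<in> P)"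

context
  fixes I :: "'a::comm_ring_1 set"
  assumes I: "ideal I"
begin

lemma ideal_0: "0 \<in> I" using I by (simp add: ideal_def)
lemma ideal_add: "a \<in> I \<Longrightarrow> b \<in> I \<Longrightarrow> a + b \<in> I" using I by (simp add: ideal_def)
lemma ideal_mult_left: "a \<in> I \<Longrightarrow> k * a \<in> I" using I by (simp add: ideal_def)
lemma ideal_mult_right: "a \<in> I \<Longrightarrow> a * k \<in> I" by (metis ideal_mult_left mult.commute)
lemma ideal_uminus: "a \<in> I \<Longrightarrow> - a \<in> I" using ideal_mult_left[of a "- 1"] by simp
lemma ideal_diff: "a \<in> I \<Longrightarrow> b \<in> I \<Longrightarrow> a - b \<in> I"
  using ideal_add[of a "- b"] ideal_uminus by simp

lemma ideal_extend:
  "ideal {m + k * x |m k. m \<in> I}" "I \<subseteq> {m + k * x |m k. m \<in> I}" "x \<in> {m + k * x |m k. m \<in> I}"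
proof -
  show "ideal {m + k * x |m k. m \<in> I}"
    unfolding ideal_def
  proof (intro conjI ballI allI)
    show "0 \<in> {m + k * x |m k. m \<in> I}"
      using ideal_0 by (metis (mono_tags, lifting) add_0 mem_Collect_eq mult_zero_left)
  next
    fix p q assume "p \<in> {m + k * x |m k. m \<in> I}" "q \<in> {m + k * x |m k. m \<in> I}"
    then obtain m1 k1 m2 k2 where "p = m1 + k1 * x" "q = m2 + k2 * x" "m1 \<in> I" "m2 \<in> I" by blast
    then have "p + q = (m1 + m2) + (k1 + k2) * x" "m1 + m2 \<in> I"
      by (auto simp: algebra_simps intro: ideal_add)
    then show "p + q \<in> {m + k * x |m k. m \<in> I}" by blast
  next
    fix p k assume "p \<in> {m + k * x |m k. m \<in> I}"
    then obtain m1 k1 where "p = m1 + k1 * x" "m1 \<in> I" by blast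
    then have "k * p = k * m1 + (k * k1) * x" "k * m1 \<in> I"
      by (auto simp: algebra_simps intro: ideal_mult_left)
    then show "k * p \<in> {m + k * x |m k. m \<in> I}" by blast
  qed
  have "m = m + 0 * x" for m by simp
  then show "I \<subseteq> {m + k * x |m k. m \<in> I}" by blast
  show "x \<in> {m + k * x |m k. m \<in> I}"
    using ideal_0 by (metis (mono_tags, lifting) add_0 mem_Collect_eq mult_1)
qed

end

definition ideal_cong :: "'a::comm_ring_1 set \<Rightarrow> 'a \<Rightarrow> 'a \<Rightarrow> bool" where
  "ideal_cong I x y \<longleftrightarrow> x - y \<in> I"

lemma equivp_ideal_cong:
  assumes I: "ideal I"
  shows "equivp (ideal_cong I)"
proof (intro equivpI reflpI sympI transpI)
  show "ideal_cong I x x" for x by (simp add: ideal_cong_def ideal_0[OF I])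
  show "ideal_cong I y x" if "ideal_cong I x y" for x y
    using ideal_uminus[OF I that[unfolded ideal_cong_def]] by (simp add: ideal_cong_def)
  show "ideal_cong I x z" if "ideal_cong I x y" "ideal_cong I y z" for x y z
    using ideal_add[OF I that[unfolded ideal_cong_def]] by (simp add: ideal_cong_def)
qed

lemma maximal_ideal_avoiding:
  fixes e :: "'a::comm_ring_1"
  assumes "e \<noteq> 0"
  shows "\<exists>M. ideal M \<and> e \<notin> M \<and> (\<forall>J. ideal J \<and> e \<notin> J \<and> M \<subseteq> J \<longrightarrow> J = M)"
proof -
  let ?A = "{I. ideal I \<and> e \<notin> I}"
  have "\<exists>M\<in>?A. \<forall>J\<in>?A. M \<subseteq> J \<longrightarrow> J = M"
  proof (rule subset_Zorn_nonempty)
    have "ideal {0::'a}" by (simp add: ideal_def)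
    then show "?A \<noteq> {}" using assms by blast
  next
    fix C assume "C \<noteq> {}" "subset.chain ?A C"
    then have C: "C \<noteq> {}" "\<And>I. I \<in> C \<Longrightarrow> ideal I \<and> e \<notin> I"
      and chain: "\<And>X Y. X \<in> C \<Longrightarrow> Y \<in> C \<Longrightarrow> X \<subseteq> Y \<or> Y \<subseteq> X"
      by (auto simp: subset.chain_def)
    have "ideal (\<Union>C)"
      unfolding ideal_def
    proof (intro conjI ballI allI)
      show "0 \<in> \<Union>C" using C ideal_0 by blast
    next
      fix a b assume "a \<in> \<Union>C" "b \<in> \<Union>C"
      then obtain X Y where XY: "X \<in> C" "Y \<in> C" "a \<in> X" "b \<in> Y" by blast
      then consider "a \<in> Y" | "b \<in> X" using chain by blast
      then show "a + b \<in> \<Union>C" using XY C ideal_add by cases blast+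
    next
      fix a k assume "a \<in> \<Union>C"
      then show "k * a \<in> \<Union>C" using C ideal_mult_left by blast
    qed
    then show "\<Union>C \<in> ?A" using C by blast
  qed
  then show ?thesis by blast
qed

lemma maximal_avoiding_idempotent_prime:
  assumes M: "ideal M" "e \<notin> M" "\<forall>J. ideal J \<and> e \<notin> J \<and> M \<subseteq> J \<longrightarrow> J = M"
    and idem: "e * e = e"
  shows "prime_ideal M"
  unfolding prime_ideal_def
proof (intro conjI allI impI)
  show "ideal M" by (rule M(1))
  show "1 \<notin> M" using M(2) ideal_mult_left[OF M(1), of 1 e] by auto
next
  fix a b assume ab: "a * b \<in> M"
  have generates: "\<exists>m k. m \<in> M \<and> e = m + k * x" if "x \<notin> M" for x
  proof -
    have "e \<in> {m + k * x |m k. m \<in> M}"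
      using M(3) ideal_extend[OF M(1), of x] that by blast
    then show ?thesis by blast
  qed
  show "a \<in> M \<or> b \<in> M"
  proof (rule ccontr)
    assume "\<not> (a \<in> M \<or> b \<in> M)"
    then obtain m1 k1 m2 k2 where m: "m1 \<in> M" "e = m1 + k1 * a" "m2 \<in> M" "e = m2 + k2 * b"
      using generates by meson
    have "e = (m1 + k1 * a) * (m2 + k2 * b)" using idem m by metis
    also have "\<dots> = m1 * (m2 + k2 * b) + (k1 * a) * m2 + (k1 * k2) * (a * b)"
      by (simp add: algebra_simps)
    also have "\<dots> \<in> M"
      using ideal_mult_right[OF M(1) m(1)] ideal_mult_left[OF M(1) m(3)] ideal_mult_left[OF M(1) ab]
      by (blast intro: ideal_add[OF M(1)])
    finally show False using M(2) by simp
  qed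
qed

text \<open>Every nonzero element of a meadow lies outside some prime ideal: take a maximal ideal
  avoiding the nonzero idempotent d d^-1.\<close>
lemma prime_ideal_avoiding:
  fixes d :: "'a::meadow"
  assumes "d \<noteq> 0"
  shows "\<exists>P. prime_ideal P \<and> d \<notin> P"
proof -
  let ?e = "d * inverse d"
  have "?e \<noteq> 0" using assms mult_inverse_eq_0_iff by blast
  then obtain M where M: "ideal M" "?e \<notin> M" "\<forall>J. ideal J \<and> ?e \<notin> J \<and> M \<subseteq> J \<longrightarrow> J = M"
    using maximal_ideal_avoiding by blast
  have "prime_ideal M"
    using maximal_avoiding_idempotent_prime[OF M idempotent_mult_inverse] .
  moreover have "d \<notin> M" using M(2) ideal_mult_right[OF M(1)] by blast
  ultimately show ?thesis by blast
qed

context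
  fixes P :: "'a::meadow set"
  assumes P: "prime_ideal P"
begin

lemma prime_ideal_ideal: "ideal P" using P by (simp add: prime_ideal_def)

lemma prime_ideal_prime: "a * b \<in> P \<Longrightarrow> a \<in> P \<or> b \<in> P" using P by (simp add: prime_ideal_def)

text \<open>Modulo a prime ideal the inverse law holds: (x x^-1 - 1) x = 0 and x is not in P.\<close>
lemma prime_ideal_inverse_law:
  assumes "x \<notin> P"
  shows "x * inverse x - 1 \<in> P"
proof -
  have "(x * inverse x - 1) * x = 0"
    using mult_inverse_reflexive[of x] by (simp add: algebra_simps)
  then show ?thesis using assms ideal_0[OF prime_ideal_ideal] prime_ideal_prime by metis
qed

lemma prime_ideal_inverse_cong:
  assumes xy: "x - y \<in> P"
  shows "inverse x - inverse y \<in> P"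
proof (cases "x \<in> P")
  case True
  have I: "ideal P" by (rule prime_ideal_ideal)
  have "y \<in> P" using ideal_diff[OF I True xy] by simp
  have inverse_in: "inverse z \<in> P" if "z \<in> P" for z
    using inverse_reflexive[of z] ideal_mult_right[OF I] that by metis
  show ?thesis using inverse_in True \<open>y \<in> P\<close> ideal_diff[OF I] by blast
next
  case False
  have I: "ideal P" by (rule prime_ideal_ideal)
  have "y \<notin> P" using ideal_add[OF I xy, of y] False by auto
  then have inv: "x * inverse x - 1 \<in> P" "y * inverse y - 1 \<in> P"
    using prime_ideal_inverse_law False by auto
  have "inverse x - inverse y = (y * inverse y - 1) * (- inverse x)
      + (x * inverse x - 1) * inverse y - (inverse x * inverse y) * (x - y)"
    by (simp add: algebra_simps)
  also have "\<dots> \<in> P"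
    using ideal_mult_right[OF I inv(1)] ideal_mult_right[OF I inv(2)] ideal_mult_left[OF I xy]
    by (blast intro: ideal_add[OF I] ideal_diff[OF I])
  finally show ?thesis .
qed

end

section \<open>Quotients of Sigma_m-structures by congruences\<close>

definition congruence :: "('a \<Rightarrow> 'a \<Rightarrow> bool) \<Rightarrow> ('a, 'b) mstruct_scheme \<Rightarrow> bool" where
  "congruence R F \<longleftrightarrow> equivp R \<and>
     (\<forall>a a' b b'. R a a' \<longrightarrow> R b b' \<longrightarrow> R (add F a b) (add F a' b') \<and> R (mul F a b) (mul F a' b')) \<and>
     (\<forall>a a'. R a a' \<longrightarrow> R (neg F a) (neg F a') \<and> R (mstruct.inv F a) (mstruct.inv F a'))"

text \<open>A chosen representative of each class; the quotient is realised on the representatives.\<close>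
definition canon :: "('a \<Rightarrow> 'a \<Rightarrow> bool) \<Rightarrow> 'a \<Rightarrow> 'a" where
  "canon R x = (SOME y. R x y)"

definition quot_struct :: "('a \<Rightarrow> 'a \<Rightarrow> bool) \<Rightarrow> ('a, 'b) mstruct_scheme \<Rightarrow> 'a mstruct" where
  "quot_struct R F = \<lparr>car = range (canon R), zero = canon R (zero F), one = canon R (one F),
     add = \<lambda>a b. canon R (add F a b), mul = \<lambda>a b. canon R (mul F a b),
     neg = \<lambda>a. canon R (neg F a), inv = \<lambda>a. canon R (mstruct.inv F a)\<rparr>"

lemma quot_struct_simps [simp]:
  "car (quot_struct R F) = range (canon R)"
  "zero (quot_struct R F) = canon R (zero F)" "one (quot_struct R F) = canon R (one F)"
  "add (quot_struct R F) a b = canon R (add F a b)" "mul (quot_struct R F) a b = canon R (mul F a b)"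
  "neg (quot_struct R F) a = canon R (neg F a)"
  "mstruct.inv (quot_struct R F) a = canon R (mstruct.inv F a)"
  by (simp_all add: quot_struct_def)

context
  fixes R :: "'a \<Rightarrow> 'a \<Rightarrow> bool"
  assumes R: "equivp R"
begin

lemma canon_rel: "R x (canon R x)"
  unfolding canon_def by (rule someI[of "R x" x]) (rule equivp_reflp[OF R])

lemma canon_eq: "R x y \<Longrightarrow> canon R x = canon R y"
  unfolding canon_def by (metis R equivp_def)

lemma canon_rel_iff: "R (canon R x) y \<longleftrightarrow> R x y"
  by (metis R canon_rel equivp_symp equivp_transp)

lemma canon_rel_eq: "a \<in> range (canon R) \<Longrightarrow> b \<in> range (canon R) \<Longrightarrow> R a b \<Longrightarrow> a = b"
  by (metis R canon_eq canon_rel equivp_symp equivp_transp rangeE)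

end

lemma quot_struct_is_mstruct: "is_mstruct (quot_struct R F)"
  by (simp add: is_mstruct_def)

context
  fixes R :: "'a \<Rightarrow> 'a \<Rightarrow> bool" and F :: "('a, 'b) mstruct_scheme"
  assumes cong: "congruence R F"
begin

lemma congruence_equivp: "equivp R" using cong by (simp add: congruence_def)

lemma eval_congruence: "\<forall>i. R (v i) (w i) \<Longrightarrow> R (eval F v t) (eval F w t)"
  using cong by (induction t) (auto simp: congruence_def equivp_reflp)

lemma eval_quot_struct: "R (eval (quot_struct R F) v t) (eval F v t)"
  using cong by (induction t)
    (simp_all add: canon_rel_iff[OF congruence_equivp] equivp_reflp[OF congruence_equivp] congruence_def)

lemma quot_struct_satisfies:
  assumes "car F = UNIV" "satisfies F E"
  shows "satisfies (quot_struct R F) E"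
  unfolding satisfies_def valid_in_def
proof (intro ballI allI impI, clarify)
  fix l r and v :: "nat \<Rightarrow> 'a"
  assume lr: "(l, r) \<in> E" and v: "\<forall>i. v i \<in> car (quot_struct R F)"
  have "eval F v l = eval F v r" using assms lr by (auto simp: satisfies_def valid_in_def)
  then have "R (eval (quot_struct R F) v l) (eval (quot_struct R F) v r)"
    using eval_quot_struct[of v l] eval_quot_struct[of v r]
    by (metis congruence_equivp equivp_symp equivp_transp)
  moreover have "eval (quot_struct R F) v t \<in> range (canon R)" for t
    using eval_closed[OF quot_struct_is_mstruct v] by simp
  ultimately show "eval (quot_struct R F) v l = eval (quot_struct R F) v r"
    by (intro canon_rel_eq[OF congruence_equivp])
qed

lemma quot_struct_valid_rel:
  assumes "valid_in (quot_struct R F) r s"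
  shows "R (eval F w r) (eval F w s)"
proof -
  let ?v = "\<lambda>i. canon R (w i)"
  have "eval (quot_struct R F) ?v r = eval (quot_struct R F) ?v s"
    using assms by (simp add: valid_in_def)
  moreover have "R (eval (quot_struct R F) ?v t) (eval F w t)" for t
    using eval_quot_struct[of ?v t] eval_congruence[of ?v w t] canon_rel[OF congruence_equivp]
    by (metis congruence_equivp equivp_symp equivp_transp)
  ultimately show ?thesis by (metis congruence_equivp equivp_symp equivp_transp)
qed

end

text \<open>Congruence modulo a prime ideal is compatible with all meadow operations; for the
  pseudo-inverse this is where primality is needed.\<close>
lemma prime_ideal_congruence:
  assumes "prime_ideal (P :: 'a::meadow set)"
  shows "congruence (ideal_cong P) meadow_struct"
proof -
  have I: "ideal P" using assms by (rule prime_ideal_ideal)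
  have "(a + b) - (a' + b') \<in> P" "(a * b) - (a' * b') \<in> P"
    if "a - a' \<in> P" "b - b' \<in> P" for a a' b b' :: 'a
  proof -
    show "(a + b) - (a' + b') \<in> P"
      using ideal_add[OF I that] by (simp add: algebra_simps)
    have "a * (b - b') + (a - a') * b' \<in> P"
      using that by (intro ideal_add[OF I] ideal_mult_left[OF I] ideal_mult_right[OF I])
    then show "(a * b) - (a' * b') \<in> P" by (simp add: algebra_simps)
  qed
  moreover have "(- a) - (- a') \<in> P" if "a - a' \<in> P" for a a' :: 'a
    using ideal_uminus[OF I that] by (simp add: algebra_simps)
  ultimately show ?thesis
    using equivp_ideal_cong[OF I] prime_ideal_inverse_cong[OF assms]
    by (simp add: congruence_def ideal_cong_def)
qed

lemma quotient_cancellation_meadow: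
  assumes P: "prime_ideal (P :: 'a::meadow set)"
  shows "cancellation_meadow (quot_struct (ideal_cong P) meadow_struct)"
proof -
  let ?R = "ideal_cong P" and ?Q = "quot_struct (ideal_cong P) meadow_struct"
  have cong: "congruence ?R meadow_struct" using P by (rule prime_ideal_congruence)
  have R: "equivp ?R" using cong by (rule congruence_equivp)
  have "satisfies_IL ?Q"
    unfolding satisfies_IL_def
  proof (intro ballI impI)
    fix x assume x: "x \<in> car ?Q" "x \<noteq> zero ?Q"
    then have "x = canon ?R x" by (auto intro: canon_rel_eq[OF R] canon_rel[OF R])
    then have "x \<notin> P" using x(2) canon_eq[OF R, of x 0] by (auto simp: ideal_cong_def)
    then have "?R (x * inverse x) 1"
      using prime_ideal_inverse_law[OF P] by (simp add: ideal_cong_def)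
    moreover have "?R (x * canon ?R (inverse x)) (x * inverse x)"
      using cong canon_rel[OF R] equivp_reflp[OF R]
      by (simp add: congruence_def) (metis R equivp_symp)
    ultimately show "mul ?Q x (mstruct.inv ?Q x) = one ?Q"
      by (simp add: canon_eq[OF R])
  qed
  then show ?thesis
    using quot_struct_is_mstruct quot_struct_satisfies[OF cong _ meadow_struct_satisfies_Md]
    by (simp add: cancellation_meadow_def)
qed

definition copy_struct :: "('b \<Rightarrow> 'a) \<Rightarrow> 'b mstruct \<Rightarrow> 'a mstruct" where
  "copy_struct h T =
     \<lparr>car = h ` car T, zero = h (zero T), one = h (one T),
      add = \<lambda>a b. h (add T (inv_into UNIV h a) (inv_into UNIV h b)),
      mul = \<lambda>a b. h (mul T (inv_into UNIV h a) (inv_into UNIV h b)),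
      neg = \<lambda>a. h (neg T (inv_into UNIV h a)),
      inv = \<lambda>a. h (mstruct.inv T (inv_into UNIV h a))\<rparr>"

lemma copy_struct_simps [simp]:
  "car (copy_struct h T) = h ` car T"
  "zero (copy_struct h T) = h (zero T)" "one (copy_struct h T) = h (one T)"
  "add (copy_struct h T) a b = h (add T (inv_into UNIV h a) (inv_into UNIV h b))"
  "mul (copy_struct h T) a b = h (mul T (inv_into UNIV h a) (inv_into UNIV h b))"
  "neg (copy_struct h T) a = h (neg T (inv_into UNIV h a))"
  "mstruct.inv (copy_struct h T) a = h (mstruct.inv T (inv_into UNIV h a))"
  by (simp_all add: copy_struct_def)

lemma eval_copy_struct:
  assumes h: "inj h" and v: "\<forall>i. v i \<in> h ` car T"
  shows "eval (copy_struct h T) v t = h (eval T (inv_into UNIV h \<circ> v) t)"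
proof -
  have "h (inv_into UNIV h (v i)) = v i" for i using v by (auto intro!: f_inv_into_f)
  then show ?thesis by (induction t) (simp_all add: inv_f_f[OF h])
qed

lemma copy_struct_valid_iff:
  fixes h :: "'b \<Rightarrow> 'a" and T :: "'b mstruct"
  assumes h: "inj h"
  shows "valid_in (copy_struct h T) r s \<longleftrightarrow> valid_in T r s"
proof
  assume V: "valid_in (copy_struct h T) r s"
  show "valid_in T r s"
    unfolding valid_in_def
  proof (intro allI impI)
    fix v :: "nat \<Rightarrow> 'b" assume v: "\<forall>i. v i \<in> car T"
    have hv: "\<forall>i. (h \<circ> v) i \<in> h ` car T" using v by auto
    have "inv_into UNIV h \<circ> (h \<circ> v) = v" using h by (auto simp: inv_f_f)
    moreover have "eval (copy_struct h T) (h \<circ> v) r = eval (copy_struct h T) (h \<circ> v) s"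
      using V hv by (simp add: valid_in_def)
    ultimately show "eval T v r = eval T v s"
      using eval_copy_struct[OF h hv] injD[OF h] by metis
  qed
next
  assume V: "valid_in T r s"
  show "valid_in (copy_struct h T) r s"
    unfolding valid_in_def
  proof (intro allI impI)
    fix v :: "nat \<Rightarrow> 'a" assume "\<forall>i. v i \<in> car (copy_struct h T)"
    then have v: "\<forall>i. v i \<in> h ` car T" by simp
    have "inv_into UNIV h (v i) \<in> car T" for i
      using v[rule_format, of i] by (auto simp: inv_f_f[OF h])
    then show "eval (copy_struct h T) v r = eval (copy_struct h T) v s"
      using V eval_copy_struct[OF h v] by (simp add: valid_in_def comp_def)
  qed
qed

lemma copy_struct_cancellation_meadow:
  assumes h: "inj h" and T: "cancellation_meadow T"
  shows "cancellation_meadow (copy_struct h T)"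
proof -
  have "is_mstruct (copy_struct h T)" "satisfies_IL (copy_struct h T)"
    using T h by (auto simp: cancellation_meadow_def is_mstruct_def satisfies_IL_def inv_f_f)
  moreover have "satisfies (copy_struct h T) Md"
    using T copy_struct_valid_iff[OF h] by (simp add: cancellation_meadow_def satisfies_def)
  ultimately show ?thesis by (simp add: cancellation_meadow_def)
qed

lemma free_meadow_counter_model:
  assumes nd: "\<not> derivable Md r s"
  shows "\<exists>T :: fm mstruct. cancellation_meadow T \<and> \<not> valid_in T r s"
proof -
  let ?d = "abs_fm r - abs_fm s"
  have "?d \<noteq> 0" using nd by (simp add: fm.abs_eq_iff)
  then obtain P :: "fm set" where P: "prime_ideal P" "?d \<notin> P"
    using prime_ideal_avoiding by blast
  let ?T = "quot_struct (ideal_cong P) meadow_struct"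
  have "\<not> valid_in ?T r s"
  proof
    assume "valid_in ?T r s"
    then have "ideal_cong P (eval meadow_struct (\<lambda>i. abs_fm (Var i)) r)
        (eval meadow_struct (\<lambda>i. abs_fm (Var i)) s)"
      by (rule quot_struct_valid_rel[OF prime_ideal_congruence[OF P(1)]])
    then show False using P(2) by (simp add: eval_free_meadow ideal_cong_def)
  qed
  then show ?thesis using quotient_cancellation_meadow[OF P(1)] by blast
qed

theorem corollary1:
  fixes r s :: mterm
  shows "derivable Md r s \<longleftrightarrow>
    (\<forall>S :: ('a::infinite) mstruct. cancellation_meadow S \<longrightarrow> valid_in S r s)"
proof
  assume "derivable Md r s"
  then show "\<forall>S :: 'a mstruct. cancellation_meadow S \<longrightarrow> valid_in S r s"
    by (auto simp: cancellation_meadow_def valid_in_def intro: soundness)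
next
  assume valid: "\<forall>S :: 'a mstruct. cancellation_meadow S \<longrightarrow> valid_in S r s"
  show "derivable Md r s"
  proof (rule ccontr)
    assume "\<not> derivable Md r s"
    then obtain T :: "fm mstruct" where T: "cancellation_meadow T" "\<not> valid_in T r s"
      using free_meadow_counter_model by blast
    obtain h :: "fm \<Rightarrow> 'a" where h: "inj h" using free_meadow_embeds by blast
    show False
      using valid copy_struct_cancellation_meadow[OF h T(1)] copy_struct_valid_iff[OF h] T(2)
      by blast
  qed
qed

end
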